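(* Let $q\neq-1$ be real and $n\ge1$. Then $T_n(x,s,q)$ is the weight of the set of all tilings of an $n$-board whose last tile (the tile covering cell $n$) is either a white square or a domino. Consequently, for $n>0$, $$T_n(x,s,q)=x\,U_{n-1}(x,s,q)+q^{n-1}s\,U_{n-2}(x,s,q).$$
   Context: $T_0=1$, $T_1=x$, $T_n(x,s,q)=(1+q^{n-1})x\,T_{n-1}(x,s,q)+q^{n-1}s\,T_{n-2}(x,s,q)$ for $n\ge2$; $U_{-1}=0$, $U_0=1$, $U_n(x,s,q)=(1+q^{n})x\,U_{n-1}(x,s,q)+q^{n-1}s\,U_{n-2}(x,s,q)$ for $n\ge1$. An $n$-board is a $1\times n$ rectangle with cells $1,\dots,n$, tiled by white squares, black squares (one cell each) and dominoes (two adjacent cells). Weight: white square $x$; black square at cell $i$: $q^ix$; domino covering cells $i-1,i$: $q^{i-1}s$; a tiling's weight is the product of its tiles' weights and a set's weight is the sum over its elements. *)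

theory Defs
  imports Main "HOL.Real"
begin

fun T :: "nat \<Rightarrow> real \<Rightarrow> real \<Rightarrow> real \<Rightarrow> real" where
  "T 0 x s q = 1"
| "T (Suc 0) x s q = x"
| "T (Suc (Suc k)) x s q =
     (1 + q ^ (Suc k)) * x * T (Suc k) x s q + q ^ (Suc k) * s * T k x s q"

(* Ush k x s q = U_{k-1}(x,s,q), i.e. U shifted by one so that U_{-1} is representable *)
fun Ush :: "nat \<Rightarrow> real \<Rightarrow> real \<Rightarrow> real \<Rightarrow> real" where
  "Ush 0 x s q = 0"
| "Ush (Suc 0) x s q = 1"
| "Ush (Suc (Suc k)) x s q =
     (1 + q ^ (Suc k)) * x * Ush (Suc k) x s q + q ^ k * s * Ush k x s q"

definition U :: "int \<Rightarrow> real \<Rightarrow> real \<Rightarrow> real \<Rightarrow> real" where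
  "U m x s q = Ush (nat (m + 1)) x s q"

datatype tile = White | Black | Domino

fun tlen :: "tile \<Rightarrow> nat" where
  "tlen White = 1" | "tlen Black = 1" | "tlen Domino = 2"

(* tilings of an n-board, listed left to right *)
definition tilings :: "nat \<Rightarrow> tile list set" where
  "tilings n = {ts. sum_list (map tlen ts) = n}"

(* weight of a tiling whose first tile starts right after cell i (cells i+1, ...) *)
fun wt :: "real \<Rightarrow> real \<Rightarrow> real \<Rightarrow> nat \<Rightarrow> tile list \<Rightarrow> real" where
  "wt x s q i [] = 1"
| "wt x s q i (White # ts) = x * wt x s q (i + 1) ts"
| "wt x s q i (Black # ts) = q ^ (i + 1) * x * wt x s q (i + 1) ts"
| "wt x s q i (Domino # ts) = q ^ (i + 1) * s * wt x s q (i + 2) ts"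

definition weight :: "real \<Rightarrow> real \<Rightarrow> real \<Rightarrow> tile list \<Rightarrow> real" where
  "weight x s q ts = wt x s q 0 ts"

end

theory Submission
  imports Defs
begin

text \<open>Classify the tilings of an \<open>n\<close>-board by their last tile. Removing a final white or black
square leaves an \<open>(n-1)\<close>-tiling and removing a final domino an \<open>(n-2)\<close>-tiling, while the
removed tile contributes \<open>x\<close>, \<open>q^n x\<close> or \<open>q^(n-1) s\<close>. Hence the total weight of all
\<open>n\<close>-tilings obeys the recurrence of \<open>U\<^sub>n\<close>, so the tilings ending in a white square or a
domino weigh \<open>x U\<^sub>n\<^sub>-\<^sub>1 + q^(n-1) s U\<^sub>n\<^sub>-\<^sub>2\<close>; an induction along both recurrences shows
that this is \<open>T\<^sub>n\<close>.\<close>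

lemma T_Suc_eq_Ush:
  "T (Suc n) x s q = x * Ush (Suc n) x s q + q ^ n * s * Ush n x s q"
proof (induction n rule: induct_nat_012)
  case (ge2 k)
  show ?case
    unfolding T.simps(3)[of "Suc k"] ge2.IH Ush.simps(3)[of "Suc k"] Ush.simps(3)[of k]
    by (simp add: algebra_simps)
qed simp_all

lemma tlen_neq_0 [simp]: "tlen t \<noteq> 0"
  by (cases t) auto

lemma wt_append: "wt x s q i (ts @ us) = wt x s q i ts * wt x s q (i + sum_list (map tlen ts)) us"
  by (induction x s q i ts rule: wt.induct) (simp_all add: algebra_simps)

lemma tilings_0: "tilings 0 = {[]}"
  by (auto simp: tilings_def)

lemma tilings_1: "tilings (Suc 0) = {[White], [Black]}"
proof -
  have "ts = [White] \<or> ts = [Black]" if "sum_list (map tlen ts) = Suc 0" for ts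
  proof (cases ts rule: rev_exhaust)
    case (snoc ys t)
    with that have length_one: "sum_list (map tlen ys) + tlen t = 1"
      by simp
    then have "ys = []"
      by (cases ys) (auto simp: add_is_1)
    with snoc length_one show ?thesis
      by (cases t) auto
  qed (use that in simp)
  then show ?thesis
    by (auto simp: tilings_def)
qed

lemma tilings_Suc_Suc:
  "tilings (Suc (Suc k)) =
     (\<lambda>ts. ts @ [White]) ` tilings (Suc k) \<union> (\<lambda>ts. ts @ [Black]) ` tilings (Suc k)
       \<union> (\<lambda>ts. ts @ [Domino]) ` tilings k"
proof (intro equalityI subsetI)
  fix ts assume "ts \<in> tilings (Suc (Suc k))"
  then show "ts \<in> (\<lambda>ts. ts @ [White]) ` tilings (Suc k) \<union> (\<lambda>ts. ts @ [Black]) ` tilings (Suc k)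
                 \<union> (\<lambda>ts. ts @ [Domino]) ` tilings k"
    by (cases ts rule: rev_exhaust; cases "last ts") (auto simp: tilings_def)
qed (auto simp: tilings_def)

lemma finite_tilings: "finite (tilings n)"
  by (induction n rule: induct_nat_012) (simp_all add: tilings_0 tilings_1 tilings_Suc_Suc)

definition board_weight :: "real \<Rightarrow> real \<Rightarrow> real \<Rightarrow> nat \<Rightarrow> real" where
  "board_weight x s q n = (\<Sum>ts \<in> tilings n. weight x s q ts)"

lemma sum_weight_snoc:
  "(\<Sum>ts \<in> (\<lambda>ts. ts @ [t]) ` tilings m. weight x s q ts) = wt x s q m [t] * board_weight x s q m"
proof -
  have "inj_on (\<lambda>ts. ts @ [t]) (tilings m)"
    by (auto intro: inj_onI)
  then show ?thesis
    by (simp add: sum.reindex sum_distrib_left board_weight_def weight_def wt_append tilings_def mult.commute)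
qed

lemma image_Int_empty_snoc:
  "t \<noteq> u \<Longrightarrow> (\<lambda>ts. ts @ [t]) ` A \<inter> (\<lambda>ts. ts @ [u]) ` B = {}"
  by auto

lemma board_weight_Suc_Suc:
  "board_weight x s q (Suc (Suc k))
     = (1 + q ^ Suc (Suc k)) * x * board_weight x s q (Suc k) + q ^ Suc k * s * board_weight x s q k"
proof -
  let ?W = "(\<lambda>ts. ts @ [White]) ` tilings (Suc k)"
  let ?B = "(\<lambda>ts. ts @ [Black]) ` tilings (Suc k)"
  let ?D = "(\<lambda>ts. ts @ [Domino]) ` tilings k"
  have "board_weight x s q (Suc (Suc k))
          = sum (weight x s q) ?W + sum (weight x s q) ?B + sum (weight x s q) ?D"
    unfolding board_weight_def tilings_Suc_Suc
    by (simp add: sum.union_disjoint finite_tilings Int_Un_distrib2 image_Int_empty_snoc)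
  then show ?thesis
    unfolding sum_weight_snoc by (simp add: algebra_simps)
qed

lemma board_weight_eq_Ush: "board_weight x s q n = Ush (Suc n) x s q"
proof (induction n rule: induct_nat_012)
  case (ge2 k)
  then show ?case
    by (simp only: board_weight_Suc_Suc Ush.simps(3))
qed (simp_all add: board_weight_def weight_def tilings_0 tilings_1 algebra_simps)

lemma weight_last_white_or_domino:
  "(\<Sum>ts \<in> {ts \<in> tilings (Suc n). last ts = White \<or> last ts = Domino}. weight x s q ts)
     = x * Ush (Suc n) x s q + q ^ n * s * Ush n x s q"
proof (cases n)
  case 0
  then have "{ts \<in> tilings (Suc n). last ts = White \<or> last ts = Domino} = {[White]}"
    by (auto simp: tilings_1)
  with 0 show ?thesis
    by (simp add: weight_def)
next
  case (Suc k)
  let ?W = "(\<lambda>ts. ts @ [White]) ` tilings (Suc k)"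
  let ?D = "(\<lambda>ts. ts @ [Domino]) ` tilings k"
  have "{ts \<in> tilings (Suc n). last ts = White \<or> last ts = Domino} = ?W \<union> ?D"
    unfolding Suc tilings_Suc_Suc by auto
  then have "(\<Sum>ts \<in> {ts \<in> tilings (Suc n). last ts = White \<or> last ts = Domino}. weight x s q ts)
               = sum (weight x s q) ?W + sum (weight x s q) ?D"
    by (simp add: sum.union_disjoint finite_tilings image_Int_empty_snoc)
  with Suc show ?thesis
    unfolding sum_weight_snoc by (simp add: board_weight_eq_Ush)
qed

theorem theorem2p4:
  fixes x s q :: real and n :: nat
  assumes "q \<noteq> -1" and "n \<ge> 1"
  shows "T n x s q = (\<Sum>ts\<in>{ts \<in> tilings n. last ts = White \<or> last ts = Domino}. weight x s q ts)
         \<and> T n x s q = x * U (int n - 1) x s q + q ^ (n - 1) * s * U (int n - 2) x s q"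
proof -
  obtain m where n: "n = Suc m"
    using assms(2) by (cases n) auto
  have "U (int n - 1) x s q = Ush (Suc m) x s q" "U (int n - 2) x s q = Ush m x s q"
    unfolding U_def n by (simp_all add: nat_int_add Suc_as_int nat_diff_distrib)
  with n show ?thesis
    using T_Suc_eq_Ush weight_last_white_or_domino by simp
qed

end
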